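(* Let $\phi$ be an instance of \textsc{Max (2,3)-SAT} with $n$ variables and let $T_\phi$ be the tournament instance constructed from $\phi$ as described in the context. Let $\mathsf{opt}_A(\phi)$ be the maximum number of clauses of $\phi$ satisfied by an assignment and $\mathsf{opt}_B(T_\phi)$ the maximum tournament value of $T_\phi$ over all seedings. Then $\mathsf{opt}_B(T_\phi)=\mathsf{opt}_A(\phi)+n$.
   Context: Tournament model: players form a finite set of size $2^{n'}$ totally ordered by strength (stronger beats weaker). A seeding is a bijection $\sigma$ from players to $[2^{n'}]$. In round $r=1,\dots,n'$, for each block of seed positions $\{(k-1)2^r+1,\dots,k2^r\}$, the winner $a$ of its first half $\{(k-1)2^r+1,\dots,(k-1)2^r+2^{r-1}\}$ plays the winner $b$ of its second half (a single-position block is won by the player seeded there), the stronger one wins the block, and the game has value $v(a,b)$ (values do not depend on the round). The tournament value is the sum of values of all games played. \textsc{Max (2,3)-SAT} instance: a CNF formula $\phi$ with variables $x_1,\dots,x_n$ and clauses $c_1,\dots,c_m$, each clause having exactly two literals and each variable appearing in at most three clauses. Construction of $T_\phi$: let $n'$ be the smallest integer with $16n\le 2^{n'}$ and $p=2^{n'}-16n$. Players: for each $i\in[n]$, variable players $x_i,x_i^T,x_i^F$ and special players $\widehat d_i,d_i,\widetilde d_i$; for each clause $c$, a clause player $c$; dummy players $f_1,\dots,f_{10n+p-m}$. Strength order (strongest first): $\widehat d_1>d_1>\widetilde d_1>\widehat d_2>d_2>\widetilde d_2>\dots>\widehat d_n>d_n>\widetilde d_n>x_1>x_1^T>x_1^F>\dots>x_n>x_n^T>x_n^F>c_1>\dots>c_m>f_1>\dots>f_{10n+p-m}$.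 Round-oblivious symmetric game values ($v(a,b)=v(b,a)$): for each $i$, $v(x_i,x_i^T)=v(x_i,x_i^F)=1$; for each clause $c$ containing a literal of variable $x$, $v(c,x^T)=1$ if $x$ appears non-negated in $c$ and $v(c,x^F)=1$ if it appears negated; for each $i$, $v(d_i,\widehat d_i)=v(d_i,\widetilde d_i)=v(d_i,x_i)=0$; for each $i$ and every player $Y$ for which the pair value has not been set above, $v(d_i,Y)=v(x_i,Y)=-5$; all remaining pairs have value $0$. Thus the values lie in $\{0,1,-5\}$. *)

theory Defs
  imports Main
begin

text \<open>Strength is encoded by a rank function: smaller rank = stronger player.  The block of round r with index k (k >= 1) consists of
  the positions (k-1)2^r+1 .. k 2^r; round 0 blocks are single positions.\<close>

definition stronger_of :: "('a \<Rightarrow> nat) \<Rightarrow> 'a \<Rightarrow> 'a \<Rightarrow> 'a" where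
  "stronger_of rk a b = (if rk a \<le> rk b then a else b)"

text \<open>s maps a seed position to the player seeded there.\<close>
fun block_winner :: "('a \<Rightarrow> nat) \<Rightarrow> (nat \<Rightarrow> 'a) \<Rightarrow> nat \<Rightarrow> nat \<Rightarrow> 'a" where
  "block_winner rk s 0 k = s k"
| "block_winner rk s (Suc r) k =
     stronger_of rk (block_winner rk s r (2 * k - 1)) (block_winner rk s r (2 * k))"

definition tournament_value ::
  "('a \<Rightarrow> nat) \<Rightarrow> ('a \<Rightarrow> 'a \<Rightarrow> int) \<Rightarrow> nat \<Rightarrow> 'a set \<Rightarrow> ('a \<Rightarrow> nat) \<Rightarrow> int" where
  "tournament_value rk v N P \<sigma> =
     (let s = the_inv_into P \<sigma> in
      (\<Sum>r\<in>{1..N}. \<Sum>k\<in>{1..2^(N - r)}.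
          v (block_winner rk s (r - 1) (2 * k - 1)) (block_winner rk s (r - 1) (2 * k))))"

definition is_seeding :: "'a set \<Rightarrow> nat \<Rightarrow> ('a \<Rightarrow> nat) \<Rightarrow> bool" where
  "is_seeding P N \<sigma> \<longleftrightarrow> bij_betw \<sigma> P {1..2^N}"

definition opt_tournament ::
  "('a \<Rightarrow> nat) \<Rightarrow> ('a \<Rightarrow> 'a \<Rightarrow> int) \<Rightarrow> nat \<Rightarrow> 'a set \<Rightarrow> int" where
  "opt_tournament rk v N P = Max {tournament_value rk v N P \<sigma> | \<sigma>. is_seeding P N \<sigma>}"

text \<open>Variables are 0..n-1. A literal is (variable, polarity), polarity True = non-negated.
  A clause is a pair of two distinct literals; a formula is a list of clauses c_0..c_(m-1).\<close>

type_synonym literal = "nat \<times> bool"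
type_synonym clause = "literal \<times> literal"

definition lit_sat :: "(nat \<Rightarrow> bool) \<Rightarrow> literal \<Rightarrow> bool" where
  "lit_sat a l \<longleftrightarrow> a (fst l) = snd l"

definition clause_sat :: "(nat \<Rightarrow> bool) \<Rightarrow> clause \<Rightarrow> bool" where
  "clause_sat a c \<longleftrightarrow> lit_sat a (fst c) \<or> lit_sat a (snd c)"

definition clause_vars :: "clause \<Rightarrow> nat set" where
  "clause_vars c = {fst (fst c), fst (snd c)}"

definition max23sat_instance :: "nat \<Rightarrow> clause list \<Rightarrow> bool" where
  "max23sat_instance n cs \<longleftrightarrow>
     (\<forall>c\<in>set cs. fst c \<noteq> snd c \<and> clause_vars c \<subseteq> {..<n}) \<and>
     (\<forall>i<n. card {j. j < length cs \<and> i \<in> clause_vars (cs ! j)} \<le> 3)"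

definition num_sat :: "clause list \<Rightarrow> (nat \<Rightarrow> bool) \<Rightarrow> nat" where
  "num_sat cs a = card {j. j < length cs \<and> clause_sat a (cs ! j)}"

definition opt_sat :: "clause list \<Rightarrow> nat" where
  "opt_sat cs = Max {num_sat cs a | a. True}"

text \<open>DH i = \<open>\<widehat>d_i\<close>, D i = d_i, DT i = \<open>\<widetilde>d_i\<close>, X i = x_i, XT i = x_i^T, XF i = x_i^F,
  C j = clause player c_j, F k = dummy f_k (all 0-based).\<close>
datatype player = DH nat | D nat | DT nat | X nat | XT nat | XF nat | C nat | F nat

definition tN :: "nat \<Rightarrow> nat" where
  "tN n = (LEAST N. 16 * n \<le> 2 ^ N)"

definition tp :: "nat \<Rightarrow> nat" where
  "tp n = 2 ^ tN n - 16 * n"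

definition players :: "nat \<Rightarrow> clause list \<Rightarrow> player set" where
  "players n cs =
     (\<Union>i\<in>{..<n}. {DH i, D i, DT i, X i, XT i, XF i}) \<union>
     C ` {..<length cs} \<union> F ` {..<10 * n + tp n - length cs}"

fun prank :: "nat \<Rightarrow> nat \<Rightarrow> player \<Rightarrow> nat" where
  "prank n m (DH i) = 3 * i"
| "prank n m (D i) = 3 * i + 1"
| "prank n m (DT i) = 3 * i + 2"
| "prank n m (X i) = 3 * n + 3 * i"
| "prank n m (XT i) = 3 * n + 3 * i + 1"
| "prank n m (XF i) = 3 * n + 3 * i + 2"
| "prank n m (C j) = 6 * n + j"
| "prank n m (F k) = 6 * n + m + k"

definition pos_in :: "nat \<Rightarrow> clause \<Rightarrow> bool" where
  "pos_in i c \<longleftrightarrow> fst c = (i, True) \<or> snd c = (i, True)"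

definition neg_in :: "nat \<Rightarrow> clause \<Rightarrow> bool" where
  "neg_in i c \<longleftrightarrow> fst c = (i, False) \<or> snd c = (i, False)"

text \<open>Values explicitly set in the construction (for the ordered pair, before symmetrisation).\<close>
fun set_val :: "clause list \<Rightarrow> player \<Rightarrow> player \<Rightarrow> int option" where
  "set_val cs (X i) (XT j) = (if i = j then Some 1 else None)"
| "set_val cs (X i) (XF j) = (if i = j then Some 1 else None)"
| "set_val cs (C j) (XT i) = (if j < length cs \<and> pos_in i (cs ! j) then Some 1 else None)"
| "set_val cs (C j) (XF i) = (if j < length cs \<and> neg_in i (cs ! j) then Some 1 else None)"
| "set_val cs (D i) (DH j) = (if i = j then Some 0 else None)"
| "set_val cs (D i) (DT j) = (if i = j then Some 0 else None)"
| "set_val cs (D i) (X j) = (if i = j then Some 0 else None)"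
| "set_val cs a b = None"

fun is_dx :: "player \<Rightarrow> bool" where
  "is_dx (D i) = True"
| "is_dx (X i) = True"
| "is_dx _ = False"

definition gval :: "clause list \<Rightarrow> player \<Rightarrow> player \<Rightarrow> int" where
  "gval cs a b =
     (case set_val cs a b of Some v \<Rightarrow> v
      | None \<Rightarrow> (case set_val cs b a of Some v \<Rightarrow> v
                | None \<Rightarrow> (if is_dx a \<or> is_dx b then -5 else 0)))"

definition opt_T :: "nat \<Rightarrow> clause list \<Rightarrow> int" where
  "opt_T n cs = opt_tournament (prank n (length cs)) (gval cs) (tN n) (players n cs)"

end

theory Submission
  imports Defs
begin

text \<open>Every player except the champion is eliminated exactly once, so the value of a seeding is the
  sum, over all eliminated players, of the value of the game against their conqueror.

  Upper bound: a game has value 1 only if \<open>x\<^sub>i\<close> eliminates \<open>x\<^sub>i\<^sup>T\<close> or \<open>x\<^sub>i\<^sup>F\<close>, or a literal player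
  eliminates a clause containing its literal. If \<open>x\<^sub>i\<close> does not survive round 2, it eliminates at
  most one literal player, which then has eliminated no clause; since variable \<open>i\<close> occurs in at
  most three clauses, the gains charged to \<open>i\<close> are then at most one more than the larger of the
  numbers of clauses eliminated by \<open>x\<^sub>i\<^sup>T\<close> and by \<open>x\<^sub>i\<^sup>F\<close>. Otherwise at most two more gains are
  charged to \<open>i\<close>, but then some game of value \<open>-5\<close> is lost by \<open>x\<^sub>i\<close> or won by \<open>d\<^sub>i\<close>, and each such
  game is blamed on at most two variables. Setting every variable according to the larger of the
  two numbers satisfies all the clauses counted.

  Lower bound: given an optimal assignment, every variable gets 16 consecutive seeds, where \<open>d\<^sub>i\<close>
  beats \<open>\<widetilde>d\<^sub>i\<close> and \<open>x\<^sub>i\<close>, \<open>x\<^sub>i\<close> beats its false literal player, \<open>\<widehat>d\<^sub>i\<close> beats \<open>d\<^sub>i\<close>, and the true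
  literal player beats the satisfied clauses assigned to \<open>i\<close>; no game then has value \<open>-5\<close>.\<close>

section \<open>Knockout tournaments\<close>

lemma power2_diff_Suc: "Suc r \<le> N \<Longrightarrow> (2::nat) ^ (N - r) = 2 * 2 ^ (N - Suc r)"
  by (metis Suc_diff_Suc Suc_le_lessD power_Suc)

locale knockout =
  fixes P :: "'a set" and N :: nat and \<sigma> :: "'a \<Rightarrow> nat" and rk :: "'a \<Rightarrow> nat"
  assumes seeding: "is_seeding P N \<sigma>" and rk_inj: "inj_on rk P"
begin

definition block_of :: "nat \<Rightarrow> 'a \<Rightarrow> nat" where
  "block_of r y = (\<sigma> y - 1) div 2 ^ r"

text \<open>As the stronger player always wins, a player wins its first \<open>r\<close> games iff it is the strongest
  player of its round-\<open>r\<close> block.\<close>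
definition survives :: "'a \<Rightarrow> nat \<Rightarrow> bool" where
  "survives y r \<longleftrightarrow> y \<in> P \<and> (\<forall>z\<in>P. block_of r z = block_of r y \<longrightarrow> rk y \<le> rk z)"

text \<open>Blocks are indexed from 0 here, but from 1 in \<^const>\<open>block_winner\<close>.\<close>
definition survivor :: "nat \<Rightarrow> nat \<Rightarrow> 'a" where
  "survivor r b = block_winner rk (the_inv_into P \<sigma>) r (Suc b)"

definition eliminated :: "'a set" where
  "eliminated = {y \<in> P. \<not> survives y N}"

definition elim_round :: "'a \<Rightarrow> nat" where
  "elim_round y = (LEAST r. \<not> survives y r)"

definition conqueror :: "'a \<Rightarrow> 'a" where
  "conqueror y = survivor (elim_round y) (block_of (elim_round y) y)"

lemma position_range: "y \<in> P \<Longrightarrow> \<sigma> y \<in> {1..2 ^ N}"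
  using seeding unfolding is_seeding_def bij_betw_def by auto

lemma position_inj: "y \<in> P \<Longrightarrow> z \<in> P \<Longrightarrow> \<sigma> y = \<sigma> z \<Longrightarrow> y = z"
  using seeding unfolding is_seeding_def bij_betw_def inj_on_def by auto

lemma block_of_Suc: "block_of (Suc r) y = block_of r y div 2"
  unfolding block_of_def power_Suc2 by (rule div_mult2_eq)

lemma block_of_mono: "r \<le> r' \<Longrightarrow> block_of r y = block_of r z \<Longrightarrow> block_of r' y = block_of r' z"
  by (induction r' rule: dec_induct) (simp_all add: block_of_Suc)

lemma block_of_less:
  assumes "y \<in> P" "r \<le> N"
  shows "block_of r y < 2 ^ (N - r)"
proof -
  have "\<sigma> y - 1 < 2 ^ r * 2 ^ (N - r)"
    using position_range[OF assms(1)] assms(2) by (auto simp flip: power_add)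
  then show ?thesis
    unfolding block_of_def by (simp add: less_mult_imp_div_less mult.commute)
qed

lemma block_of_beyond:
  assumes "y \<in> P" "N \<le> r"
  shows "block_of r y = 0"
proof -
  have "(2::nat) ^ N \<le> 2 ^ r"
    by (rule power_increasing[OF assms(2)]) simp
  then have "\<sigma> y \<le> 2 ^ r"
    using position_range[OF assms(1)] by (meson atLeastAtMost_iff order_trans)
  then have "\<sigma> y - 1 < 2 ^ r"
    using zero_less_power[of "2::nat" r] by linarith
  then show ?thesis by (simp add: block_of_def)
qed

lemma survives_0:
  assumes "y \<in> P"
  shows "survives y 0"
proof -
  have "z = y" if "z \<in> P" "\<sigma> z - 1 = \<sigma> y - 1" for z
    using that position_range[of z] position_range[OF assms] position_inj[OF that(1) assms]
    by auto
  then show ?thesis using assms by (auto simp: survives_def block_of_def)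
qed

lemma survives_mono: "survives y r \<Longrightarrow> r' \<le> r \<Longrightarrow> survives y r'"
  unfolding survives_def using block_of_mono by blast

lemma survives_unique:
  assumes "survives y r" "survives z r" "block_of r y = block_of r z"
  shows "y = z"
  using assms rk_inj unfolding survives_def inj_on_def by (metis le_antisym)

lemma not_survivesI:
  assumes "z \<in> P" "block_of r z = block_of r y" "rk z < rk y"
  shows "\<not> survives y r"
  using assms by (auto simp: survives_def)

lemma survives_champion:
  assumes "survives y N"
  shows "survives y r"
proof (cases "N \<le> r")
  case True
  then show ?thesis
    using assms block_of_beyond by (simp add: survives_def)
next
  case False
  then show ?thesis using assms survives_mono by simp
qed

lemma survivor_Suc:
  "survivor (Suc r) b = stronger_of rk (survivor r (2 * b)) (survivor r (2 * b + 1))"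
  by (simp add: survivor_def)

lemma survivor_survives:
  assumes "r \<le> N" "b < 2 ^ (N - r)"
  shows "survives (survivor r b) r \<and> block_of r (survivor r b) = b"
  using assms
proof (induction r arbitrary: b)
  case 0
  then have "Suc b \<in> {1..2 ^ N}" by simp
  moreover have bij: "bij_betw \<sigma> P {1..2 ^ N}"
    using seeding by (simp add: is_seeding_def)
  ultimately have "survivor 0 b \<in> P" "\<sigma> (survivor 0 b) = Suc b"
    unfolding survivor_def block_winner.simps
    using bij_betw_apply[OF bij_betw_the_inv_into[OF bij]] f_the_inv_into_f_bij_betw[OF bij]
    by blast+
  then show ?case by (simp add: survives_0 block_of_def)
next
  case (Suc r)
  define y z where "y = survivor r (2 * b)" and "z = survivor r (2 * b + 1)"
  have "2 * b + 1 < 2 ^ (N - r)"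
    using Suc.prems power2_diff_Suc[of r N] by simp
  then have y: "survives y r" "block_of r y = 2 * b"
    and z: "survives z r" "block_of r z = 2 * b + 1"
    using Suc by (auto simp: y_def z_def)
  define w where "w = survivor (Suc r) b"
  have w: "w = (if rk y \<le> rk z then y else z)"
    by (simp add: w_def y_def z_def survivor_Suc stronger_of_def)
  have "rk w \<le> rk x" if "x \<in> P" "block_of (Suc r) x = b" for x
  proof -
    have "block_of r x = 2 * b \<or> block_of r x = 2 * b + 1"
      using that(2) unfolding block_of_Suc by linarith
    then show ?thesis
      using y z that(1) unfolding w survives_def by auto
  qed
  moreover have "block_of (Suc r) w = b"
    using y z by (simp add: w block_of_Suc)
  moreover have "w \<in> P"
    using y z by (simp add: w survives_def)
  ultimately show ?case
    unfolding w_def survives_def by auto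
qed

lemma survivor_eqI:
  assumes "survives y r" "r \<le> N"
  shows "survivor r (block_of r y) = y"
proof -
  have "block_of r y < 2 ^ (N - r)"
    using assms block_of_less by (simp add: survives_def)
  then show ?thesis
    using survivor_survives[OF assms(2)] survives_unique[OF _ assms(1)] by blast
qed

lemma elim_roundD:
  assumes "y \<in> eliminated"
  shows "1 \<le> elim_round y" "elim_round y \<le> N"
    "survives y (elim_round y - 1)" "\<not> survives y (elim_round y)"
proof -
  have y: "y \<in> P" "\<not> survives y N" using assms by (auto simp: eliminated_def)
  show nsurv: "\<not> survives y (elim_round y)"
    unfolding elim_round_def using y(2) by (rule LeastI)
  show "elim_round y \<le> N"
    unfolding elim_round_def using y(2) by (rule Least_le)
  show "1 \<le> elim_round y"
    using nsurv survives_0[OF y(1)] by (cases "elim_round y") auto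
  then show "survives y (elim_round y - 1)"
    using not_less_Least[of "elim_round y - 1" "\<lambda>r. \<not> survives y r"]
    by (simp add: elim_round_def)
qed

lemma eliminatedI:
  assumes "y \<in> P" "z \<in> P" "rk z < rk y"
  shows "y \<in> eliminated"
proof -
  have "block_of N z = block_of N y"
    using assms block_of_beyond by simp
  then show ?thesis
    using assms by (auto simp: eliminated_def survives_def)
qed

lemma survives_iff_less_elim_round:
  assumes "y \<in> eliminated"
  shows "survives y r \<longleftrightarrow> r < elim_round y"
proof
  assume "survives y r"
  then show "r < elim_round y"
    using elim_roundD(4)[OF assms] survives_mono[of y r "elim_round y"] by fastforce
next
  assume "r < elim_round y"
  then show "survives y r"
    using elim_roundD(3)[OF assms] survives_mono by simp
qed

lemma conquerorD:
  assumes "y \<in> eliminated"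
  shows "survives (conqueror y) (elim_round y)"
    "block_of (elim_round y) (conqueror y) = block_of (elim_round y) y"
    "rk (conqueror y) < rk y"
proof -
  let ?r = "elim_round y"
  have y: "y \<in> P" using assms by (simp add: eliminated_def)
  show surv: "survives (conqueror y) ?r" and blk: "block_of ?r (conqueror y) = block_of ?r y"
    using survivor_survives[OF elim_roundD(2)[OF assms] block_of_less[OF y elim_roundD(2)[OF assms]]]
    by (simp_all add: conqueror_def)
  have "rk (conqueror y) \<le> rk y" using surv blk y by (auto simp: survives_def)
  moreover have "conqueror y \<noteq> y" using surv elim_roundD(4)[OF assms] by auto
  ultimately show "rk (conqueror y) < rk y"
    using rk_inj y surv by (auto simp: survives_def inj_on_def le_less)
qed

lemma survives_conqueror:
  assumes "y \<in> eliminated" "r \<le> elim_round y"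
  shows "survives (conqueror y) r"
  using conquerorD(1)[OF assms(1)] survives_mono assms(2) by blast

lemma conqueror_eqI:
  assumes "survives y (r - 1)" "\<not> survives y r" "survives w r" "block_of r w = block_of r y"
  shows "y \<in> eliminated" "elim_round y = r" "conqueror y = w"
proof -
  have "y \<in> P"
    using assms(1) by (simp add: survives_def)
  moreover have "\<not> survives y N"
    using assms(2) survives_champion by blast
  ultimately show elim: "y \<in> eliminated" by (simp add: eliminated_def)
  have "r - 1 < elim_round y" "\<not> r < elim_round y"
    using assms(1,2) survives_iff_less_elim_round[OF elim] by auto
  moreover have "r \<noteq> 0" using assms(1,2) by (cases r) auto
  ultimately show r: "elim_round y = r" by linarith
  show "conqueror y = w"
    using survivor_eqI[OF assms(3)] elim_roundD(2)[OF elim] assms(4) r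
    by (simp add: conqueror_def)
qed

lemma round_opponents:
  assumes "y \<in> eliminated"
  defines "r \<equiv> elim_round y - 1" and "b \<equiv> block_of (elim_round y) y"
  shows "{survivor r (2 * b), survivor r (2 * b + 1)} = {conqueror y, y}"
proof -
  have r: "elim_round y = Suc r" "Suc r \<le> N"
    using elim_roundD[OF assms(1)] by (auto simp: r_def)
  have y: "y \<in> P" using assms(1) by (simp add: eliminated_def)
  have b: "b < 2 ^ (N - Suc r)"
    using block_of_less[OF y r(2)] by (simp add: b_def r(1))
  then have "2 * b + 1 < 2 ^ (N - r)"
    using power2_diff_Suc[OF r(2)] by simp
  then have halves: "block_of r (survivor r (2 * b)) = 2 * b"
    "block_of r (survivor r (2 * b + 1)) = 2 * b + 1"
    using survivor_survives r(2) by auto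
  have "survives y r" using elim_roundD(3)[OF assms(1)] by (simp add: r(1))
  moreover have "block_of r y = 2 * b \<or> block_of r y = 2 * b + 1"
    using block_of_Suc[of r y] by (simp add: b_def r(1)) linarith
  ultimately have "y \<in> {survivor r (2 * b), survivor r (2 * b + 1)}"
    using survivor_eqI r(2) by force
  moreover have "conqueror y = survivor (Suc r) b"
    by (simp add: conqueror_def r(1) b_def)
  then have "conqueror y \<in> {survivor r (2 * b), survivor r (2 * b + 1)}"
    by (simp add: survivor_Suc stronger_of_def)
  moreover have "conqueror y \<noteq> y"
    using conquerorD(3)[OF assms(1)] by auto
  moreover have "survivor r (2 * b) \<noteq> survivor r (2 * b + 1)"
    using halves by auto
  ultimately show ?thesis by auto
qed

lemma conqueror_inj:
  assumes "y \<in> eliminated" "z \<in> eliminated"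
    and "conqueror y = conqueror z" "elim_round y = elim_round z"
  shows "y = z"
proof -
  have "block_of (elim_round y) y = block_of (elim_round z) z"
    using conquerorD(2)[OF assms(1)] conquerorD(2)[OF assms(2)] assms(3,4) by simp
  then have "{conqueror y, y} = {conqueror z, z}"
    using round_opponents[OF assms(1)] round_opponents[OF assms(2)] assms(4) by simp
  moreover have "conqueror y \<noteq> y" using conquerorD(3)[OF assms(1)] by auto
  ultimately show ?thesis using assms(3) by (auto simp: doubleton_eq_iff)
qed

lemma ex_conquered:
  assumes "survives w r" "1 \<le> r" "r \<le> N"
  obtains y where "y \<in> eliminated" "elim_round y = r" "conqueror y = w"
proof -
  obtain r' where r: "r = Suc r'" using assms(2) by (cases r) auto
  define b where "b = block_of r w"
  have "b < 2 ^ (N - r)"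
    using block_of_less assms(1,3) by (simp add: b_def survives_def)
  then have "2 * b + 1 < 2 ^ (N - r')"
    using power2_diff_Suc[of r' N] assms(3) by (simp add: r)
  then have halves: "survives (survivor r' (2 * b)) r'" "block_of r' (survivor r' (2 * b)) = 2 * b"
    "survives (survivor r' (2 * b + 1)) r'" "block_of r' (survivor r' (2 * b + 1)) = 2 * b + 1"
    using survivor_survives r assms(3) by auto
  define y where "y = (if w = survivor r' (2 * b) then survivor r' (2 * b + 1) else survivor r' (2 * b))"
  have w: "survives w r'" using assms(1) survives_mono r by simp
  have "block_of r' w = 2 * b \<or> block_of r' w = 2 * b + 1"
    using block_of_Suc[of r' w] by (simp add: b_def r) linarith
  then have "w = survivor r' (2 * b) \<or> w = survivor r' (2 * b + 1)"
    using survivor_eqI[OF w] r assms(3) by force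
  then have "survives y r' \<and> y \<noteq> w \<and> block_of r' y div 2 = b"
    using halves unfolding y_def by (cases "w = survivor r' (2 * b)") auto
  then have y: "survives y r'" "y \<noteq> w" "block_of r y = b"
    by (simp_all add: r block_of_Suc)
  then have "\<not> survives y r"
    using survives_unique[OF _ assms(1)] by (auto simp: b_def)
  with y assms(1) have "y \<in> eliminated" "elim_round y = r" "conqueror y = w"
    using conqueror_eqI[of y r w] by (simp_all add: r b_def)
  then show ?thesis by (rule that)
qed

text \<open>Every game is identified by the player eliminated in it.\<close>
lemma bij_betw_elimination_game:
  "bij_betw (\<lambda>y. (elim_round y, Suc (block_of (elim_round y) y))) eliminated
     (SIGMA r:{1..N}. {1..(2::nat) ^ (N - r)})"
proof (rule bij_betw_imageI)
  show "inj_on (\<lambda>y. (elim_round y, Suc (block_of (elim_round y) y))) eliminated"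
    by (rule inj_onI) (auto simp: conqueror_def intro: conqueror_inj)
  show "(\<lambda>y. (elim_round y, Suc (block_of (elim_round y) y))) ` eliminated
      = (SIGMA r:{1..N}. {1..(2::nat) ^ (N - r)})"
  proof (intro equalityI subsetI)
    fix g assume "g \<in> (\<lambda>y. (elim_round y, Suc (block_of (elim_round y) y))) ` eliminated"
    then obtain y where "y \<in> eliminated" "g = (elim_round y, Suc (block_of (elim_round y) y))"
      by blast
    then show "g \<in> (SIGMA r:{1..N}. {1..(2::nat) ^ (N - r)})"
      using elim_roundD block_of_less[of y "elim_round y"]
      by (auto simp: eliminated_def Suc_le_eq)
  next
    fix g assume "g \<in> (SIGMA r:{1..N}. {1..(2::nat) ^ (N - r)})"
    then obtain r k where g: "g = (r, k)" "1 \<le> r" "r \<le> N" "1 \<le> k" "k \<le> 2 ^ (N - r)"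
      by auto
    then have w: "survives (survivor r (k - 1)) r" "block_of r (survivor r (k - 1)) = k - 1"
      using survivor_survives by auto
    obtain y where "y \<in> eliminated" "elim_round y = r" "conqueror y = survivor r (k - 1)"
      using ex_conquered[OF w(1) g(2,3)] .
    moreover from this have "block_of r y = k - 1"
      using conquerorD(2) w(2) by metis
    ultimately show "g \<in> (\<lambda>y. (elim_round y, Suc (block_of (elim_round y) y))) ` eliminated"
      using g by (auto intro!: image_eqI[of _ _ y])
  qed
qed

theorem tournament_value_conquerors:
  assumes sym: "\<And>a b. v a b = v b a"
  shows "tournament_value rk v N P \<sigma> = (\<Sum>y\<in>eliminated. v (conqueror y) y)"
proof -
  define game where "game r k = v (survivor (r - 1) (2 * (k - 1))) (survivor (r - 1) (2 * (k - 1) + 1))"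
    for r k
  have "tournament_value rk v N P \<sigma> = (\<Sum>r\<in>{1..N}. \<Sum>k\<in>{1..(2::nat) ^ (N - r)}. game r k)"
    unfolding tournament_value_def game_def survivor_def Let_def
    by (intro sum.cong refl) (simp add: Suc_diff_Suc numeral_2_eq_2 mult_Suc_right)
  also have "\<dots> = (\<Sum>(r, k)\<in>(SIGMA r:{1..N}. {1..(2::nat) ^ (N - r)}). game r k)"
    by (rule sum.Sigma) auto
  also have "\<dots> = (\<Sum>y\<in>eliminated. game (elim_round y) (Suc (block_of (elim_round y) y)))"
    using sum.reindex_bij_betw[OF bij_betw_elimination_game, of "\<lambda>(r, k). game r k"] by simp
  also have "\<dots> = (\<Sum>y\<in>eliminated. v (conqueror y) y)"
  proof (rule sum.cong)
    fix y assume "y \<in> eliminated"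
    then show "game (elim_round y) (Suc (block_of (elim_round y) y)) = v (conqueror y) y"
      using round_opponents[of y] sym by (auto simp: game_def doubleton_eq_iff)
  qed simp
  finally show ?thesis .
qed

end

lemma opt_tournament_eqI:
  assumes "\<And>\<sigma>. is_seeding P N \<sigma> \<Longrightarrow> L \<le> tournament_value rk v N P \<sigma> \<and> tournament_value rk v N P \<sigma> \<le> M"
    and "is_seeding P N \<sigma>\<^sub>0" "tournament_value rk v N P \<sigma>\<^sub>0 = M"
  shows "opt_tournament rk v N P = M"
proof -
  let ?V = "{tournament_value rk v N P \<sigma> |\<sigma>. is_seeding P N \<sigma>}"
  have "?V \<subseteq> {L..M}"
    using assms(1) by auto
  moreover have "M \<in> ?V"
    using assms(2,3) by force
  ultimately show ?thesis
    unfolding opt_tournament_def by (intro Max_eqI finite_subset[of ?V "{L..M}"]) auto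
qed

section \<open>Upper bound\<close>

fun lit_player :: "literal \<Rightarrow> player" where
  "lit_player (i, True) = XT i"
| "lit_player (i, False) = XF i"

fun player_index :: "player \<Rightarrow> nat" where
  "player_index (DH i) = i"
| "player_index (D i) = i"
| "player_index (DT i) = i"
| "player_index (X i) = i"
| "player_index (XT i) = i"
| "player_index (XF i) = i"
| "player_index (C j) = j"
| "player_index (F k) = k"

definition clause_lits :: "clause \<Rightarrow> literal set" where
  "clause_lits c = {fst c, snd c}"

definition occurrences :: "clause list \<Rightarrow> nat \<Rightarrow> nat set" where
  "occurrences cs i = {j. j < length cs \<and> i \<in> clause_vars (cs ! j)}"

lemma clause_lits_var: "l \<in> clause_lits c \<Longrightarrow> fst l \<in> clause_vars c"
  by (auto simp: clause_lits_def clause_vars_def)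

lemma clause_satI: "l \<in> clause_lits c \<Longrightarrow> lit_sat a l \<Longrightarrow> clause_sat a c"
  by (auto simp: clause_lits_def clause_sat_def)

lemma finite_num_sat_values: "finite {num_sat cs a |a. True}"
proof -
  have "num_sat cs a \<le> length cs" for a
    unfolding num_sat_def by (rule order_trans[OF card_mono card_lessThan[THEN eq_imp_le]]) auto
  then show ?thesis
    by (auto intro: finite_subset[of _ "{..length cs}"])
qed

lemma num_sat_le_opt_sat: "num_sat cs a \<le> opt_sat cs"
  unfolding opt_sat_def by (rule Max_ge[OF finite_num_sat_values]) auto

lemma ex_optimal_assignment: "\<exists>a. num_sat cs a = opt_sat cs"
proof -
  have "opt_sat cs \<in> {num_sat cs a |a. True}"
    unfolding opt_sat_def by (rule Max_in[OF finite_num_sat_values]) auto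
  then show ?thesis by auto
qed

lemma lit_player_eq_iff [simp]:
  "XT i = lit_player l \<longleftrightarrow> l = (i, True)" "XF i = lit_player l \<longleftrightarrow> l = (i, False)"
  by (cases l; cases "snd l"; auto)+

lemma lit_player_neq_C [simp]: "lit_player l \<noteq> C j"
  by (cases l; cases "snd l") auto

lemma lit_player_inj: "lit_player l = lit_player l' \<longleftrightarrow> l = l'"
  by (cases l; cases "snd l"; auto)

lemma mem_players:
  "y \<in> players n cs \<longleftrightarrow>
     (case y of C j \<Rightarrow> j < length cs | F k \<Rightarrow> k < 10 * n + tp n - length cs
      | _ \<Rightarrow> player_index y < n)"
  by (cases y) (auto simp: players_def)

lemma finite_players: "finite (players n cs)"
  by (simp add: players_def)

lemma prank_inj: "inj_on (prank n (length cs)) (players n cs)"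
proof (rule inj_onI)
  fix y z assume "y \<in> players n cs" "z \<in> players n cs"
    "prank n (length cs) y = prank n (length cs) z"
  then show "y = z"
    by (cases y; cases z) (auto simp: mem_players; presburger)+
qed

lemma gval_sym: "gval cs a b = gval cs b a"
  by (cases a; cases b) (simp_all add: gval_def split: option.splits)

lemma gval_cases: "gval cs a b = 0 \<or> gval cs a b = 1 \<or> gval cs a b = -5"
  by (cases a; cases b) (simp_all add: gval_def split: option.splits)

lemma gval_eq_1:
  assumes "gval cs w y = 1" "w \<in> players n cs" "y \<in> players n cs"
    and "prank n (length cs) w < prank n (length cs) y"
  shows "(\<exists>i b. w = X i \<and> y = lit_player (i, b)) \<or>
    (\<exists>j l. y = C j \<and> j < length cs \<and> w = lit_player l \<and> l \<in> clause_lits (cs ! j))"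
  using assms
  by (cases w; cases y)
    (auto simp: gval_def mem_players clause_lits_def pos_in_def neg_in_def
      split: if_splits option.splits)

lemma gval_X_lit_player: "gval cs (X i) (lit_player (i, b)) = 1"
  by (cases b) (simp_all add: gval_def)

lemma gval_lit_player_clause:
  assumes "j < length cs" "l \<in> clause_lits (cs ! j)"
  shows "gval cs (lit_player l) (C j) = 1"
  using assms by (cases l; cases "snd l") (auto simp: gval_def clause_lits_def pos_in_def neg_in_def)

lemma gval_stronger_than_X:
  assumes "prank n m w < prank n m (X i)" "w \<noteq> D i"
  shows "gval cs w (X i) = -5"
  using assms by (cases w) (auto simp: gval_def)

lemma gval_D_weaker:
  assumes "prank n m (D i) < prank n m y" "y \<noteq> DT i" "y \<noteq> X i"
  shows "gval cs (D i) y = -5"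
  using assms by (cases y) (auto simp: gval_def split: if_splits)

lemma gval_nonneg: "\<not> is_dx w \<Longrightarrow> \<not> is_dx y \<Longrightarrow> 0 \<le> gval cs w y"
  by (cases w; cases y) (auto simp: gval_def split: option.splits)

lemma card_occurrences: "max23sat_instance n cs \<Longrightarrow> i < n \<Longrightarrow> card (occurrences cs i) \<le> 3"
  by (simp add: max23sat_instance_def occurrences_def)

lemma clause_vars_less: "max23sat_instance n cs \<Longrightarrow> j < length cs \<Longrightarrow> clause_vars (cs ! j) \<subseteq> {..<n}"
  by (simp add: max23sat_instance_def)

locale instance_tournament = knockout "players n cs" N \<sigma> "prank n (length cs)"
  for n cs N \<sigma> +
  assumes max23: "max23sat_instance n cs"
begin

definition elimination_value :: "player \<Rightarrow> int" where
  "elimination_value y = gval cs (conqueror y) y"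

lemma tournament_value_eq:
  "tournament_value (prank n (length cs)) (gval cs) N (players n cs) \<sigma>
     = (\<Sum>y\<in>eliminated. elimination_value y)"
  unfolding elimination_value_def by (rule tournament_value_conquerors) (rule gval_sym)

lemma finite_eliminated: "finite eliminated"
  using finite_players by (simp add: eliminated_def)

lemma conqueror_in_players: "y \<in> eliminated \<Longrightarrow> conqueror y \<in> players n cs"
  using conquerorD(1) by (simp add: survives_def)

lemma eliminated_in_players: "y \<in> eliminated \<Longrightarrow> y \<in> players n cs"
  by (simp add: eliminated_def)

lemma eliminated_if_weaker_than_D:
  assumes "y \<in> players n cs" "i < n" "prank n (length cs) (D i) < prank n (length cs) y"
  shows "y \<in> eliminated"
  using eliminatedI[OF assms(1) _ assms(3)] assms(2) by (simp add: mem_players)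

definition gains :: "player set" where
  "gains = {y \<in> eliminated. elimination_value y = 1}"

definition penalties :: "player set" where
  "penalties = {y \<in> eliminated. elimination_value y = -5}"

lemma sum_elimination_value:
  "(\<Sum>y\<in>eliminated. elimination_value y) = int (card gains) - 5 * int (card penalties)"
proof -
  have "(\<Sum>y\<in>eliminated. elimination_value y)
      = (\<Sum>y\<in>eliminated. of_bool (y \<in> gains) - 5 * of_bool (y \<in> penalties))"
    using gval_cases by (intro sum.cong) (auto simp: gains_def penalties_def elimination_value_def)
  also have "\<dots> = int (card gains) - 5 * int (card penalties)"
    using finite_eliminated
    by (simp add: sum_subtractf sum_distrib_left[symmetric] Int_absorb1 gains_def penalties_def
        Collect_conj_eq[symmetric] Int_def)
  finally show ?thesis .
qed

definition x_beats :: "nat \<Rightarrow> bool \<Rightarrow> bool" where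
  "x_beats i b \<longleftrightarrow> conqueror (lit_player (i, b)) = X i"

definition won_clauses :: "literal \<Rightarrow> nat set" where
  "won_clauses l = {j. j < length cs \<and> conqueror (C j) = lit_player l \<and> l \<in> clause_lits (cs ! j)}"

definition gain_players :: "nat \<Rightarrow> player set" where
  "gain_players i = {lit_player (i, b) |b. x_beats i b}
     \<union> C ` (won_clauses (i, True) \<union> won_clauses (i, False))"

lemma gains_subset: "gains \<subseteq> (\<Union>i<n. gain_players i)"
proof
  fix y assume y: "y \<in> gains"
  then have "y \<in> eliminated" "gval cs (conqueror y) y = 1"
    by (auto simp: gains_def elimination_value_def)
  then consider i b where "conqueror y = X i" "y = lit_player (i, b)"
    | j l where "y = C j" "j < length cs" "conqueror y = lit_player l" "l \<in> clause_lits (cs ! j)"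
    using gval_eq_1[OF _ conqueror_in_players eliminated_in_players conquerorD(3)] by blast
  then show "y \<in> (\<Union>i<n. gain_players i)"
  proof cases
    case (1 i b)
    have "i < n"
      using eliminated_in_players[OF \<open>y \<in> eliminated\<close>] 1(2) by (cases b) (simp_all add: mem_players)
    moreover have "y \<in> {lit_player (i, b) |b. x_beats i b}"
      using 1 unfolding x_beats_def by blast
    ultimately show ?thesis
      unfolding gain_players_def by blast
  next
    case (2 j l)
    obtain i b where l: "l = (i, b)" by fastforce
    have "i \<in> clause_vars (cs ! j)"
      using clause_lits_var[OF 2(4)] by (simp add: l)
    then have "i < n"
      using clause_vars_less[OF max23 2(2)] by auto
    moreover have "j \<in> won_clauses (i, True) \<union> won_clauses (i, False)"
      using 2 by (cases b) (simp_all add: won_clauses_def l)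
    ultimately show ?thesis
      using 2(1) unfolding gain_players_def by blast
  qed
qed

lemma finite_won_clauses: "finite (won_clauses l)"
  by (simp add: won_clauses_def)

lemma card_won_clauses:
  assumes "i < n"
  shows "card (won_clauses (i, True)) + card (won_clauses (i, False)) \<le> 3"
proof -
  have "won_clauses (i, True) \<union> won_clauses (i, False) \<subseteq> occurrences cs i"
  proof
    fix j assume "j \<in> won_clauses (i, True) \<union> won_clauses (i, False)"
    then obtain b where "j < length cs" "(i, b) \<in> clause_lits (cs ! j)"
      by (auto simp: won_clauses_def)
    then show "j \<in> occurrences cs i"
      using clause_lits_var[of "(i, b)"] by (simp add: occurrences_def)
  qed
  then have "card (won_clauses (i, True) \<union> won_clauses (i, False)) \<le> card (occurrences cs i)"
    by (rule card_mono[rotated]) (simp add: occurrences_def)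
  then have "card (won_clauses (i, True) \<union> won_clauses (i, False)) \<le> 3"
    using card_occurrences[OF max23 assms] by linarith
  moreover have "won_clauses (i, True) \<inter> won_clauses (i, False) = {}"
    by (auto simp: won_clauses_def)
  ultimately show ?thesis
    by (simp add: card_Un_disjoint finite_won_clauses)
qed

lemma lit_player_eliminated: "i < n \<Longrightarrow> lit_player (i, b) \<in> eliminated"
  by (rule eliminated_if_weaker_than_D[of _ i]) (cases b; simp add: mem_players)+

lemma clause_eliminated:
  assumes "j < length cs"
  shows "C j \<in> eliminated"
proof -
  have "fst (fst (cs ! j)) < n"
    using clause_vars_less[OF max23 assms] by (simp add: clause_vars_def)
  then show ?thesis
    using assms by (intro eliminated_if_weaker_than_D[of _ "fst (fst (cs ! j))"]) (simp_all add: mem_players)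
qed

lemma X_eliminated: "i < n \<Longrightarrow> X i \<in> eliminated"
  by (rule eliminated_if_weaker_than_D[of _ i]) (simp_all add: mem_players)

lemma elim_round_if_x_beats:
  assumes "i < n" "\<not> survives (X i) 2" "x_beats i b"
  shows "elim_round (lit_player (i, b)) = 1"
proof -
  have elim: "lit_player (i, b) \<in> eliminated"
    using lit_player_eliminated[OF assms(1)] .
  have "\<not> 2 \<le> elim_round (lit_player (i, b))"
    using survives_conqueror[OF elim, of 2] assms(2,3) by (auto simp: x_beats_def)
  then show ?thesis using elim_roundD(1)[OF elim] by simp
qed

lemma x_beats_once:
  assumes "i < n" "\<not> survives (X i) 2" "x_beats i True"
  shows "\<not> x_beats i False"
proof
  assume "x_beats i False"
  then have "lit_player (i, True) = lit_player (i, False)"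
    using assms elim_round_if_x_beats[OF assms(1,2), of True] elim_round_if_x_beats[OF assms(1,2), of False]
      conqueror_inj[OF lit_player_eliminated[OF assms(1), of True] lit_player_eliminated[OF assms(1), of False]]
    by (simp add: x_beats_def)
  then show False by simp
qed

lemma x_beats_no_won_clauses:
  assumes "i < n" "\<not> survives (X i) 2" "x_beats i b"
  shows "won_clauses (i, b) = {}"
proof (rule ccontr)
  assume "won_clauses (i, b) \<noteq> {}"
  then obtain j where j: "j < length cs" "conqueror (C j) = lit_player (i, b)"
    by (auto simp: won_clauses_def)
  have "survives (lit_player (i, b)) 1"
    using survives_conqueror[OF clause_eliminated[OF j(1)]] elim_roundD(1)[OF clause_eliminated[OF j(1)]]
    by (simp add: j(2))
  then show False
    using survives_iff_less_elim_round[OF lit_player_eliminated[OF assms(1)]]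
      elim_round_if_x_beats[OF assms] by simp
qed

lemma card_gain_players_le:
  "card (gain_players i) \<le> of_bool (x_beats i True) + of_bool (x_beats i False)
      + card (won_clauses (i, True)) + card (won_clauses (i, False))"
proof -
  have "{lit_player (i, b) |b. x_beats i b}
      = (if x_beats i True then {XT i} else {}) \<union> (if x_beats i False then {XF i} else {})"
    by (auto simp: all_bool_eq ex_bool_eq)
  then have "card {lit_player (i, b) |b. x_beats i b} \<le> of_bool (x_beats i True) + of_bool (x_beats i False)"
    by (simp add: card_insert_if)
  moreover have "card (C ` (won_clauses (i, True) \<union> won_clauses (i, False)))
      \<le> card (won_clauses (i, True)) + card (won_clauses (i, False))"
    using card_image_le[of "won_clauses (i, True) \<union> won_clauses (i, False)" C]
      card_Un_le[of "won_clauses (i, True)" "won_clauses (i, False)"]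
    by (simp add: finite_won_clauses)
  ultimately show ?thesis
    using card_Un_le[of "{lit_player (i, b) |b. x_beats i b}" "C ` (won_clauses (i, True) \<union> won_clauses (i, False))"]
    unfolding gain_players_def by linarith
qed

lemma card_gain_players:
  assumes "i < n"
  shows "card (gain_players i) \<le>
    max (card (won_clauses (i, True))) (card (won_clauses (i, False))) + 1 + 2 * of_bool (survives (X i) 2)"
  using card_gain_players_le[of i] card_won_clauses[OF assms]
    x_beats_once[OF assms] x_beats_no_won_clauses[OF assms]
  by (cases "survives (X i) 2"; cases "x_beats i True"; cases "x_beats i False") (auto simp: max_def)

text \<open>The stronger \<open>d\<^sub>i\<close> eventually eliminates \<open>x\<^sub>i\<close> unless some other player does, at a cost of 5.
  If \<open>d\<^sub>i\<close> does so after round 2, it has also won a game in round 1 and one in round 2, and at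
  most one of these two opponents is \<open>\<widetilde>d\<^sub>i\<close>, the only player besides \<open>x\<^sub>i\<close> whom \<open>d\<^sub>i\<close> beats at no cost.\<close>
lemma penalty_if_X_survives:
  assumes "i < n" "survives (X i) 2"
  obtains y where "y \<in> penalties" "y = X i \<or> conqueror y = D i"
proof -
  have X: "X i \<in> eliminated" using X_eliminated[OF assms(1)] .
  have r: "2 < elim_round (X i)" "elim_round (X i) \<le> N"
    using survives_iff_less_elim_round[OF X] assms(2) elim_roundD(2)[OF X] by auto
  show thesis
  proof (cases "conqueror (X i) = D i")
    case False
    then have "elimination_value (X i) = -5"
      using gval_stronger_than_X conquerorD(3)[OF X] by (simp add: elimination_value_def)
    then show thesis using that X by (simp add: penalties_def)
  next
    case True
    have D: "survives (D i) 1" "survives (D i) 2"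
      using survives_conqueror[OF X] r(1) True by simp_all
    obtain y1 where y1: "y1 \<in> eliminated" "elim_round y1 = 1" "conqueror y1 = D i"
      using ex_conquered[OF D(1) order.refl] r by force
    obtain y2 where y2: "y2 \<in> eliminated" "elim_round y2 = 2" "conqueror y2 = D i"
      using ex_conquered[OF D(2)] r by force
    have "y1 \<noteq> y2" "y1 \<noteq> X i" "y2 \<noteq> X i"
      using y1(2) y2(2) r(1) by auto
    then obtain y where y: "y \<in> eliminated" "conqueror y = D i" "y \<noteq> DT i" "y \<noteq> X i"
      using y1 y2 by (cases "y1 = DT i") auto
    then have "elimination_value y = -5"
      using gval_D_weaker conquerorD(3)[OF y(1)] by (simp add: elimination_value_def)
    then show thesis using that y by (simp add: penalties_def)
  qed
qed

lemma card_X_survivors: "card {i. i < n \<and> survives (X i) 2} \<le> 2 * card penalties"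
proof -
  have "{i. i < n \<and> survives (X i) 2} \<subseteq> player_index ` penalties \<union> (player_index \<circ> conqueror) ` penalties"
  proof
    fix i assume "i \<in> {i. i < n \<and> survives (X i) 2}"
    then obtain y where "y \<in> penalties" "y = X i \<or> conqueror y = D i"
      using penalty_if_X_survives by blast
    then show "i \<in> player_index ` penalties \<union> (player_index \<circ> conqueror) ` penalties"
      by force
  qed
  moreover have "finite penalties"
    using finite_eliminated by (simp add: penalties_def)
  ultimately have "card {i. i < n \<and> survives (X i) 2}
      \<le> card (player_index ` penalties) + card ((player_index \<circ> conqueror) ` penalties)"
    by (meson card_Un_le card_mono finite_Un finite_imageI le_trans)
  also have "\<dots> \<le> 2 * card penalties"
    using card_image_le[OF \<open>finite penalties\<close>, of player_index]
      card_image_le[OF \<open>finite penalties\<close>, of "player_index \<circ> conqueror"] by linarith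
  finally show ?thesis .
qed

definition majority :: "nat \<Rightarrow> bool" where
  "majority i \<longleftrightarrow> card (won_clauses (i, False)) \<le> card (won_clauses (i, True))"

lemma sum_max_won_clauses:
  "(\<Sum>i<n. max (card (won_clauses (i, True))) (card (won_clauses (i, False))))
     \<le> num_sat cs majority"
proof -
  have "(\<Sum>i<n. max (card (won_clauses (i, True))) (card (won_clauses (i, False))))
      = (\<Sum>i<n. card (won_clauses (i, majority i)))"
  proof (rule sum.cong)
    fix i
    have "majority i \<Longrightarrow> card (won_clauses (i, False)) \<le> card (won_clauses (i, True))"
      and "\<not> majority i \<Longrightarrow> card (won_clauses (i, True)) < card (won_clauses (i, False))"
      by (simp_all add: majority_def)
    then show "max (card (won_clauses (i, True))) (card (won_clauses (i, False)))
        = card (won_clauses (i, majority i))"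
      by (cases "majority i") (simp_all add: max_def)
  qed simp
  also have "\<dots> = card (\<Union>i<n. won_clauses (i, majority i))"
    by (rule card_UN_disjoint[symmetric]) (auto simp: finite_won_clauses won_clauses_def lit_player_inj)
  also have "\<dots> \<le> num_sat cs majority"
    unfolding num_sat_def
    by (rule card_mono) (auto simp: won_clauses_def lit_sat_def intro: clause_satI)
  finally show ?thesis .
qed

lemma finite_gain_players: "finite (gain_players i)"
proof -
  have "gain_players i \<subseteq> {XT i, XF i} \<union> C ` {..<length cs}"
    by (auto simp: gain_players_def won_clauses_def ex_bool_eq)
  then show ?thesis by (rule finite_subset) simp
qed

theorem tournament_value_le_opt:
  "tournament_value (prank n (length cs)) (gval cs) N (players n cs) \<sigma> \<le> int (opt_sat cs) + int n"
proof -
  let ?max = "\<lambda>i. max (card (won_clauses (i, True))) (card (won_clauses (i, False)))"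
  have "card gains \<le> (\<Sum>i<n. card (gain_players i))"
    using card_mono[OF _ gains_subset] card_UN_le[of "{..<n}" gain_players]
    by (simp add: finite_gain_players)
  also have "\<dots> \<le> (\<Sum>i<n. ?max i + 1 + 2 * of_bool (survives (X i) 2))"
    by (intro sum_mono card_gain_players) simp
  also have "\<dots> = (\<Sum>i<n. ?max i) + n + 2 * card {i. i < n \<and> survives (X i) 2}"
  proof -
    have "(\<Sum>i<n. of_bool (survives (X i) 2) :: nat) = card {i. i < n \<and> survives (X i) 2}"
      by (simp add: Int_def lessThan_def)
    then show ?thesis by (simp only: sum.distrib sum_distrib_left[symmetric]) simp
  qed
  also have "\<dots> \<le> num_sat cs majority + n + 4 * card penalties"
    using sum_max_won_clauses card_X_survivors by linarith
  finally have "int (card gains) - 5 * int (card penalties) \<le> int (num_sat cs majority) + int n"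
    by linarith
  then show ?thesis
    using tournament_value_eq sum_elimination_value num_sat_le_opt_sat[of cs majority] by linarith
qed

lemma tournament_value_bounded_below:
  "- 5 * int (card (players n cs)) \<le> tournament_value (prank n (length cs)) (gval cs) N (players n cs) \<sigma>"
proof -
  have "- 5 * int (card (players n cs)) \<le> - 5 * int (card eliminated)"
    using card_mono[OF finite_players, of eliminated] by (simp add: eliminated_def)
  also have "\<dots> \<le> (\<Sum>y\<in>eliminated. elimination_value y)"
  proof -
    have "- 5 \<le> elimination_value y" for y
      using gval_cases[of cs "conqueror y" y] by (auto simp: elimination_value_def)
    then show ?thesis using sum_mono[of eliminated "\<lambda>_. -5" elimination_value] by simp
  qed
  finally show ?thesis by (simp add: tournament_value_eq)
qed

end

section \<open>Seeding according to an assignment\<close>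

fun is_weak :: "player \<Rightarrow> bool" where
  "is_weak (C j) = True"
| "is_weak (F k) = True"
| "is_weak _ = False"

definition sat_clauses :: "clause list \<Rightarrow> (nat \<Rightarrow> bool) \<Rightarrow> nat set" where
  "sat_clauses cs a = {j. j < length cs \<and> clause_sat a (cs ! j)}"

definition chosen_var :: "(nat \<Rightarrow> bool) \<Rightarrow> clause \<Rightarrow> nat" where
  "chosen_var a c = (if lit_sat a (fst c) then fst (fst c) else fst (snd c))"

definition clause_rank :: "clause list \<Rightarrow> (nat \<Rightarrow> bool) \<Rightarrow> nat \<Rightarrow> nat" where
  "clause_rank cs a j = card {j' \<in> occurrences cs (chosen_var a (cs ! j)). j' < j}"

text \<open>Slots are seed positions counted from 0. Variable \<open>i\<close> owns the slots \<open>16 i, \<dots>, 16 i + 15\<close>;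
  the player of the literal made true by \<open>a\<close> sits at offset 8. A satisfied clause sits in the
  block of its chosen variable at offset \<open>8 + 2 ^ k\<close>, where \<open>k < 3\<close> is its rank among the clauses
  containing that variable, so that it survives \<open>k\<close> rounds among the dummies at offsets 11 and
  13--15 and then meets that literal player. The offsets 5--7 and the unused clause offsets are
  left to the remaining players.\<close>
fun home_var :: "clause list \<Rightarrow> (nat \<Rightarrow> bool) \<Rightarrow> player \<Rightarrow> nat" where
  "home_var cs a (C j) = chosen_var a (cs ! j)"
| "home_var cs a (F k) = k div 4"
| "home_var cs a y = player_index y"

fun offset :: "clause list \<Rightarrow> (nat \<Rightarrow> bool) \<Rightarrow> player \<Rightarrow> nat" where
  "offset cs a (D i) = 0"
| "offset cs a (DT i) = 1"
| "offset cs a (X i) = 2"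
| "offset cs a (DH i) = 4"
| "offset cs a (XT i) = (if a i then 8 else 3)"
| "offset cs a (XF i) = (if a i then 3 else 8)"
| "offset cs a (C j) = 8 + 2 ^ clause_rank cs a j"
| "offset cs a (F k) = (if k mod 4 = 0 then 11 else 12 + k mod 4)"

definition slot :: "clause list \<Rightarrow> (nat \<Rightarrow> bool) \<Rightarrow> player \<Rightarrow> nat" where
  "slot cs a y = 16 * home_var cs a y + offset cs a y"

definition placed :: "nat \<Rightarrow> clause list \<Rightarrow> (nat \<Rightarrow> bool) \<Rightarrow> player set" where
  "placed n cs a = {y \<in> players n cs. \<not> is_weak y} \<union> F ` {..<4 * n} \<union> C ` sat_clauses cs a"

lemma num_sat_eq_card: "num_sat cs a = card (sat_clauses cs a)"
  by (simp add: num_sat_def sat_clauses_def)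

lemma length_le_3n:
  assumes "max23sat_instance n cs"
  shows "length cs \<le> 3 * n"
proof -
  have "{..<length cs} \<subseteq> (\<Union>i<n. occurrences cs i)"
  proof
    fix j assume "j \<in> {..<length cs}"
    then have "fst (fst (cs ! j)) \<in> clause_vars (cs ! j)" "clause_vars (cs ! j) \<subseteq> {..<n}"
      using clause_vars_less[OF assms] by (auto simp: clause_vars_def)
    then show "j \<in> (\<Union>i<n. occurrences cs i)"
      using \<open>j \<in> {..<length cs}\<close> by (auto simp: occurrences_def)
  qed
  then have "length cs \<le> card (\<Union>i<n. occurrences cs i)"
    using card_mono[of "\<Union>i<n. occurrences cs i" "{..<length cs}"] by (simp add: occurrences_def)
  also have "\<dots> \<le> (\<Sum>i<n. card (occurrences cs i))"
    by (rule card_UN_le) simp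
  also have "\<dots> \<le> (\<Sum>i<n. 3)"
    by (rule sum_mono) (simp add: card_occurrences[OF assms])
  finally show ?thesis by simp
qed

lemma chosen_var_in_clause_vars: "chosen_var a c \<in> clause_vars c"
  by (simp add: chosen_var_def clause_vars_def)

lemma chosen_var_less:
  assumes "max23sat_instance n cs" "j < length cs"
  shows "chosen_var a (cs ! j) < n"
  using clause_vars_less[OF assms] chosen_var_in_clause_vars[of a "cs ! j"] by blast

lemma chosen_lit_in_clause:
  "clause_sat a c \<Longrightarrow> (chosen_var a c, a (chosen_var a c)) \<in> clause_lits c"
  by (cases c) (auto simp: chosen_var_def clause_sat_def lit_sat_def clause_lits_def)

lemma clause_rank_le:
  assumes "max23sat_instance n cs" "j < length cs"
  shows "clause_rank cs a j \<le> 2"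
proof -
  let ?O = "occurrences cs (chosen_var a (cs ! j))"
  have "card ?O \<le> 3"
    using card_occurrences[OF assms(1) chosen_var_less[OF assms]] .
  moreover have "insert j {j' \<in> ?O. j' < j} \<subseteq> ?O"
    using assms(2) chosen_var_in_clause_vars by (auto simp: occurrences_def)
  then have "card (insert j {j' \<in> ?O. j' < j}) \<le> card ?O"
    by (rule card_mono[rotated]) (simp add: occurrences_def)
  ultimately show ?thesis
    by (simp add: clause_rank_def occurrences_def)
qed

lemma card_less_strict_mono:
  fixes S :: "nat set"
  assumes "finite S" "j \<in> S" "j < j'"
  shows "card {x \<in> S. x < j} < card {x \<in> S. x < j'}"
  using assms by (intro psubset_card_mono) auto

lemma clause_rank_inj:
  assumes "j < length cs" "j' < length cs" "chosen_var a (cs ! j) = chosen_var a (cs ! j')"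
    and "clause_rank cs a j = clause_rank cs a j'"
  shows "j = j'"
proof -
  let ?O = "occurrences cs (chosen_var a (cs ! j))"
  have "finite ?O" "j \<in> ?O" "j' \<in> ?O"
    using assms(1-3) chosen_var_in_clause_vars[of a "cs ! j"] chosen_var_in_clause_vars[of a "cs ! j'"]
    by (auto simp: occurrences_def)
  then show ?thesis
    using card_less_strict_mono[of ?O j j'] card_less_strict_mono[of ?O j' j] assms(3,4)
    by (cases j j' rule: linorder_cases) (auto simp: clause_rank_def)
qed

lemma placed_clause: "C j \<in> placed n cs a \<Longrightarrow> j \<in> sat_clauses cs a"
  by (auto simp: placed_def)

lemma sat_clause_rank_le:
  "max23sat_instance n cs \<Longrightarrow> j \<in> sat_clauses cs a \<Longrightarrow> clause_rank cs a j \<le> 2"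
  by (simp add: clause_rank_le sat_clauses_def)

lemma offset_clause:
  assumes "max23sat_instance n cs" "j \<in> sat_clauses cs a"
  shows "offset cs a (C j) \<in> {9, 10, 12}"
proof -
  have "clause_rank cs a j \<in> {0, 1, 2}"
    using sat_clause_rank_le[OF assms] by auto
  then show ?thesis by auto
qed

lemma offset_dummy: "offset cs a (F k) \<in> {11, 13, 14, 15}"
proof -
  have "k mod 4 \<in> {0, 1, 2, 3}" by auto
  then show ?thesis by auto
qed

lemma slot_dummy: "c < 4 \<Longrightarrow> slot cs a (F (4 * i + c)) = 16 * i + (if c = 0 then 11 else 12 + c)"
  by (simp add: slot_def)

lemma placed_dummy: "i < n \<Longrightarrow> c < 4 \<Longrightarrow> F (4 * i + c) \<in> placed n cs a"
  by (simp add: placed_def)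

lemma offset_strong: "\<not> is_weak y \<Longrightarrow> offset cs a y \<le> 8"
  by (cases y) auto

lemma offset_weak:
  assumes "max23sat_instance n cs" "y \<in> placed n cs a" "is_weak y"
  shows "offset cs a y \<in> {9, 10, 11, 12, 13, 14, 15}"
proof (cases y)
  case (C j)
  then show ?thesis
    using offset_clause[OF assms(1) placed_clause[of j n cs a]] assms(2) by auto
next
  case (F k)
  then show ?thesis
    using offset_dummy[of cs a k] by auto
qed (use assms(3) in auto)

lemma is_weak_iff_offset:
  assumes "max23sat_instance n cs" "y \<in> placed n cs a"
  shows "is_weak y \<longleftrightarrow> 9 \<le> offset cs a y"
  using offset_strong[of y cs a] offset_weak[OF assms] by (cases "is_weak y") auto

lemma offset_less:
  assumes "max23sat_instance n cs" "y \<in> placed n cs a"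
  shows "offset cs a y < 16"
  using offset_strong[of y cs a] offset_weak[OF assms] by (cases "is_weak y") auto

lemma home_var_offset_inj:
  assumes "max23sat_instance n cs" "y \<in> placed n cs a" "z \<in> placed n cs a"
    and "home_var cs a y = home_var cs a z" "offset cs a y = offset cs a z"
  shows "y = z"
proof (cases "is_weak y")
  case False
  then have "\<not> is_weak z"
    using is_weak_iff_offset[OF assms(1,2)] is_weak_iff_offset[OF assms(1,3)] assms(5) by simp
  then show ?thesis
    using False assms(4,5) by (cases y; cases z) (auto split: if_splits)
next
  case True
  then have "is_weak z"
    using is_weak_iff_offset[OF assms(1,2)] is_weak_iff_offset[OF assms(1,3)] assms(5) by simp
  have clause: "j \<in> sat_clauses cs a \<and> offset cs a (C j) \<in> {9, 10, 12}" if "C j \<in> placed n cs a" for j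
    using placed_clause[OF that] offset_clause[OF assms(1)] by blast
  consider (clauses) j j' where "y = C j" "z = C j'" | (dummies) k k' where "y = F k" "z = F k'"
    | (mixed) "offset cs a y \<in> {9, 10, 12}" "offset cs a z \<in> {11, 13, 14, 15}"
    | (mixed') "offset cs a z \<in> {9, 10, 12}" "offset cs a y \<in> {11, 13, 14, 15}"
    using \<open>is_weak y\<close> \<open>is_weak z\<close> clause assms(2,3) offset_dummy
    by (cases y; cases z) auto
  then show ?thesis
  proof cases
    case (clauses j j')
    then have "j \<in> sat_clauses cs a" "j' \<in> sat_clauses cs a"
      using clause assms(2,3) by auto
    then show ?thesis
      using clause_rank_inj[of j cs j' a] assms(4,5) clauses by (simp add: sat_clauses_def)
  next
    case (dummies k k')
    then have "k div 4 = k' div 4" "k mod 4 = k' mod 4"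
      using assms(4,5) by (auto split: if_splits)
    then show ?thesis
      using dummies by (metis div_mult_mod_eq)
  qed (use assms(5) in auto)
qed

lemma slot_inj:
  assumes "max23sat_instance n cs"
  shows "inj_on (slot cs a) (placed n cs a)"
proof (rule inj_onI)
  fix y z assume y: "y \<in> placed n cs a" and z: "z \<in> placed n cs a" and "slot cs a y = slot cs a z"
  then have "slot cs a y div 16 = slot cs a z div 16" "slot cs a y mod 16 = slot cs a z mod 16"
    by simp_all
  then show "y = z"
    using home_var_offset_inj[OF assms y z] offset_less[OF assms y] offset_less[OF assms z]
    by (simp add: slot_def)
qed

lemma home_var_less:
  assumes "max23sat_instance n cs" "y \<in> placed n cs a"
  shows "home_var cs a y < n"
proof (cases y)
  case (C j)
  then have "j < length cs"
    using assms(2) placed_clause by (simp add: sat_clauses_def)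
  then show ?thesis
    using C chosen_var_less[OF assms(1)] by simp
qed (use assms(2) in \<open>auto simp: placed_def mem_players\<close>)

lemma slot_less:
  assumes "max23sat_instance n cs" "y \<in> placed n cs a"
  shows "slot cs a y < 16 * n"
  using home_var_less[OF assms] offset_less[OF assms] by (simp add: slot_def)

lemma tN_ge: "16 * n \<le> 2 ^ tN n"
proof -
  have "16 * n \<le> 2 ^ (16 * n)"
    using less_exp[of "16 * n"] by simp
  then show ?thesis unfolding tN_def by (rule LeastI)
qed

lemma placed_subset:
  assumes "max23sat_instance n cs"
  shows "placed n cs a \<subseteq> players n cs"
  using length_le_3n[OF assms] by (auto simp: placed_def sat_clauses_def mem_players)

lemma card_players:
  assumes "max23sat_instance n cs"
  shows "card (players n cs) = 2 ^ tN n"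
proof -
  define V where "V = (\<Union>i\<in>{..<n}. {DH i, D i, DT i, X i, XT i, XF i})"
  define K where "K = 10 * n + tp n - length cs"
  have "card V = (\<Sum>i<n. card {DH i, D i, DT i, X i, XT i, XF i})"
    unfolding V_def by (rule card_UN_disjoint) auto
  then have "card V = 6 * n" by simp
  moreover have "card (C ` {..<length cs}) = length cs" "card (F ` {..<K}) = K"
    by (simp_all add: card_image inj_on_def)
  moreover have "players n cs = V \<union> C ` {..<length cs} \<union> F ` {..<K}"
    by (simp add: players_def V_def K_def)
  moreover have "V \<inter> C ` {..<length cs} = {}" "(V \<union> C ` {..<length cs}) \<inter> F ` {..<K} = {}"
    by (auto simp: V_def)
  ultimately have "card (players n cs) = 6 * n + length cs + K"
    by (simp add: card_Un_disjoint V_def)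
  then show ?thesis
    using length_le_3n[OF assms] tN_ge[of n] by (simp add: K_def tp_def)
qed

lemma extend_inj_on_to_bij_betw:
  assumes "finite U" "finite V" "card U = card V" "inj_on f A" "A \<subseteq> U" "f ` A \<subseteq> V"
  obtains g where "bij_betw g U V" "\<And>x. x \<in> A \<Longrightarrow> g x = f x"
proof -
  have "card (U - A) = card (V - f ` A)"
    using assms finite_subset[OF assms(5,1)] by (simp add: card_Diff_subset card_image)
  then obtain h where h: "bij_betw h (U - A) (V - f ` A)"
    using finite_same_card_bij assms(1,2) by blast
  define g where "g x = (if x \<in> A then f x else h x)" for x
  have "bij_betw g A (f ` A)"
    using assms(4) by (simp add: g_def bij_betw_def inj_on_def image_def)
  moreover have "bij_betw g (U - A) (V - f ` A)"
    using h by (rule bij_betw_cong[THEN iffD1, rotated]) (simp add: g_def)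
  ultimately have "bij_betw g (A \<union> (U - A)) (f ` A \<union> (V - f ` A))"
    by (rule bij_betw_combine) auto
  moreover have "A \<union> (U - A) = U" "f ` A \<union> (V - f ` A) = V"
    using assms(5,6) by auto
  ultimately show ?thesis
    using that by (simp add: g_def)
qed

lemma ex_slot_seeding:
  assumes "max23sat_instance n cs"
  obtains \<sigma> where "is_seeding (players n cs) (tN n) \<sigma>"
    "\<And>y. y \<in> placed n cs a \<Longrightarrow> \<sigma> y = Suc (slot cs a y)"
proof -
  have "inj_on (Suc \<circ> slot cs a) (placed n cs a)"
    using slot_inj[OF assms] by (simp add: inj_on_def)
  moreover have "(Suc \<circ> slot cs a) ` placed n cs a \<subseteq> {1..2 ^ tN n}"
    using slot_less[OF assms] tN_ge[of n] by fastforce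
  moreover have "card (players n cs) = card {1..(2::nat) ^ tN n}"
    using card_players[OF assms] by simp
  ultimately obtain \<sigma> where "bij_betw \<sigma> (players n cs) {1..2 ^ tN n}"
    "\<And>y. y \<in> placed n cs a \<Longrightarrow> \<sigma> y = Suc (slot cs a y)"
    using extend_inj_on_to_bij_betw[OF finite_players finite_atLeastAtMost _ _ placed_subset[OF assms]]
    by (metis comp_apply)
  then show ?thesis
    using that by (simp add: is_seeding_def)
qed

lemma div_power2_eq_iff:
  fixes j j' c c' r :: nat
  assumes "r \<le> 4" "c < 16" "c' < 16"
  shows "(16 * j + c) div 2 ^ r = (16 * j' + c') div 2 ^ r \<longleftrightarrow> j = j' \<and> c div 2 ^ r = c' div 2 ^ r"
proof -
  have 16: "(16::nat) = 2 ^ (4 - r) * 2 ^ r"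
    using assms(1) by (simp flip: power_add)
  have split: "(16 * j + c) div 2 ^ r = 2 ^ (4 - r) * j + c div 2 ^ r" for j c :: nat
  proof -
    have e: "16 * j + c = c + 2 ^ (4 - r) * j * 2 ^ r"
      by (simp add: 16 algebra_simps)
    have "(c + 2 ^ (4 - r) * j * 2 ^ r) div 2 ^ r = 2 ^ (4 - r) * j + c div 2 ^ r"
      by (rule div_mult_self1) simp
    then show ?thesis by (simp only: e)
  qed
  have less: "c div 2 ^ r < 2 ^ (4 - r)" "c' div 2 ^ r < 2 ^ (4 - r)"
    using assms(2,3) by (simp_all add: 16 less_mult_imp_div_less)
  show ?thesis
    unfolding split
  proof
    assume "2 ^ (4 - r) * j + c div 2 ^ r = 2 ^ (4 - r) * j' + c' div 2 ^ r"
    then have "(2 ^ (4 - r) * j + c div 2 ^ r) div 2 ^ (4 - r) = (2 ^ (4 - r) * j' + c' div 2 ^ r) div 2 ^ (4 - r)"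
      "(2 ^ (4 - r) * j + c div 2 ^ r) mod 2 ^ (4 - r) = (2 ^ (4 - r) * j' + c' div 2 ^ r) mod 2 ^ (4 - r)"
      by simp_all
    then show "j = j' \<and> c div 2 ^ r = c' div 2 ^ r"
      using less by simp
  qed simp
qed

section \<open>Lower bound\<close>

locale slot_seeding = instance_tournament n cs "tN n" \<sigma> for n cs \<sigma> +
  fixes a :: "nat \<Rightarrow> bool"
  assumes seeded_at_slot: "y \<in> placed n cs a \<Longrightarrow> \<sigma> y = Suc (slot cs a y)"
begin

abbreviation rank :: "player \<Rightarrow> nat" where
  "rank \<equiv> prank n (length cs)"

abbreviation true_lit :: "nat \<Rightarrow> player" where
  "true_lit i \<equiv> lit_player (i, a i)"

abbreviation false_lit :: "nat \<Rightarrow> player" where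
  "false_lit i \<equiv> lit_player (i, \<not> a i)"

lemma block_of_placed: "y \<in> placed n cs a \<Longrightarrow> block_of r y = slot cs a y div 2 ^ r"
  by (simp add: block_of_def seeded_at_slot)

lemma player_at_slot:
  assumes "y \<in> players n cs" "z \<in> placed n cs a" "\<sigma> y - 1 = slot cs a z"
  shows "y = z"
proof -
  have "z \<in> players n cs" using placed_subset[OF max23] assms(2) by blast
  moreover have "\<sigma> y = \<sigma> z"
    using position_range[OF assms(1)] assms(3) seeded_at_slot[OF assms(2)] by auto
  ultimately show ?thesis using position_inj[OF assms(1)] by blast
qed

lemma strong_placed: "y \<in> players n cs \<Longrightarrow> \<not> is_weak y \<Longrightarrow> y \<in> placed n cs a"
  by (simp add: placed_def)

lemma rank_weak: "y \<in> players n cs \<Longrightarrow> is_weak y \<Longrightarrow> 6 * n \<le> rank y"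
  by (cases y) auto

lemma placed_vars:
  assumes "i < n"
  shows "D i \<in> placed n cs a" "DT i \<in> placed n cs a" "X i \<in> placed n cs a"
    "DH i \<in> placed n cs a" "lit_player (i, b) \<in> placed n cs a"
  using assms by (cases b; simp add: placed_def mem_players)+

lemma slot_lit_player:
  "slot cs a (true_lit i) = 16 * i + 8" "slot cs a (false_lit i) = 16 * i + 3"
  by (cases "a i"; simp add: slot_def)+

lemma mem_block_of_D:
  assumes "i < n" "y \<in> players n cs" "block_of 2 y = 4 * i"
  shows "y \<in> {D i, DT i, X i, false_lit i}"
proof -
  have "\<sigma> y - 1 = 16 * i + (\<sigma> y - 1) mod 4"
    using assms(3) div_mult_mod_eq[of "\<sigma> y - 1" 4] by (simp add: block_of_def)
  moreover have "(\<sigma> y - 1) mod 4 \<in> {0, 1, 2, 3}" by auto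
  ultimately show ?thesis
    using player_at_slot[OF assms(2) placed_vars(1)[OF assms(1)]]
      player_at_slot[OF assms(2) placed_vars(2)[OF assms(1)]]
      player_at_slot[OF assms(2) placed_vars(3)[OF assms(1)]]
      player_at_slot[OF assms(2) placed_vars(5)[OF assms(1), of "\<not> a i"]] slot_lit_player
    by (auto simp: slot_def)
qed

lemma mem_block_of_X:
  assumes "i < n" "y \<in> players n cs" "block_of 1 y = 8 * i + 1"
  shows "y \<in> {X i, false_lit i}"
proof -
  have "\<sigma> y - 1 = 16 * i + 2 + (\<sigma> y - 1) mod 2"
    using assms(3) div_mult_mod_eq[of "\<sigma> y - 1" 2] by (simp add: block_of_def)
  moreover have "(\<sigma> y - 1) mod 2 \<in> {0, 1}" by auto
  ultimately show ?thesis
    using player_at_slot[OF assms(2) placed_vars(3)[OF assms(1)]]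
      player_at_slot[OF assms(2) placed_vars(5)[OF assms(1), of "\<not> a i"]] slot_lit_player
    by (auto simp: slot_def)
qed

lemma same_block_iff:
  assumes "y \<in> placed n cs a" "z \<in> placed n cs a" "r \<le> 4"
  shows "block_of r y = block_of r z \<longleftrightarrow>
    home_var cs a y = home_var cs a z \<and> offset cs a y div 2 ^ r = offset cs a z div 2 ^ r"
  using div_power2_eq_iff[OF assms(3) offset_less[OF max23 assms(1)] offset_less[OF max23 assms(2)]]
  by (simp add: block_of_placed assms(1,2) slot_def)

lemma survivesI_by_slot:
  assumes "y \<in> placed n cs a" "rank y < 6 * n" "r \<le> 4"
    and "\<And>z. z \<in> players n cs \<Longrightarrow> \<not> is_weak z \<Longrightarrow> home_var cs a z = home_var cs a y \<Longrightarrow>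
      offset cs a z div 2 ^ r = offset cs a y div 2 ^ r \<Longrightarrow> rank y \<le> rank z"
  shows "survives y r"
  unfolding survives_def
proof (intro conjI ballI impI)
  show "y \<in> players n cs" using assms(1) placed_subset[OF max23] by blast
  fix z assume z: "z \<in> players n cs" "block_of r z = block_of r y"
  show "rank y \<le> rank z"
  proof (cases "is_weak z")
    case True
    then show ?thesis using rank_weak[OF z(1)] assms(2) by simp
  next
    case False
    then have "z \<in> placed n cs a" using strong_placed[OF z(1)] by blast
    then have "home_var cs a z = home_var cs a y \<and> offset cs a z div 2 ^ r = offset cs a y div 2 ^ r"
      using z(2) same_block_iff[OF _ assms(1,3)] by blast
    then show ?thesis using assms(4) z(1) False by blast
  qed
qed

lemma survives_D: "i < n \<Longrightarrow> survives (D i) 2"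
  by (rule survivesI_by_slot) (auto simp: placed_vars elim!: is_weak.elims split: if_splits)

lemma survives_X: "i < n \<Longrightarrow> survives (X i) 1"
  by (rule survivesI_by_slot) (auto simp: placed_vars elim!: is_weak.elims split: if_splits)

lemma survives_DH: "i < n \<Longrightarrow> survives (DH i) 3"
  by (rule survivesI_by_slot) (auto simp: placed_vars elim!: is_weak.elims split: if_splits)

lemma survives_true_lit:
  assumes "i < n"
  shows "survives (true_lit i) 3"
proof (rule survivesI_by_slot)
  show "true_lit i \<in> placed n cs a"
    using placed_vars(5)[OF assms] .
  show "rank (true_lit i) < 6 * n"
    using assms by (cases "a i") simp_all
  fix z assume "\<not> is_weak z" "home_var cs a z = home_var cs a (true_lit i)"
    "offset cs a z div 2 ^ 3 = offset cs a (true_lit i) div 2 ^ 3"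
  then have "z = true_lit i"
    by (cases "a i"; cases z) (auto split: if_splits)
  then show "rank (true_lit i) \<le> rank z" by simp
qed simp

lemma DH_D_same_block: "i < n \<Longrightarrow> block_of 3 (DH i) = block_of 3 (D i)"
  using same_block_iff placed_vars by simp

lemma not_survives_D: "i < n \<Longrightarrow> \<not> survives (D i) 3"
  using DH_D_same_block by (intro not_survivesI[of "DH i"]) (simp_all add: mem_players)

lemma conqueror_D:
  assumes "i < n"
  shows "conqueror (D i) = DH i"
  using conqueror_eqI(3)[of "D i" 3 "DH i"] survives_D[OF assms] not_survives_D[OF assms]
    survives_DH[OF assms] DH_D_same_block[OF assms]
  by simp

lemma D_X_same_block: "i < n \<Longrightarrow> block_of 2 (D i) = block_of 2 (X i)"
  using same_block_iff placed_vars by simp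

lemma not_survives_X: "i < n \<Longrightarrow> \<not> survives (X i) 2"
  using D_X_same_block by (intro not_survivesI[of "D i"]) (simp_all add: mem_players)

lemma conqueror_X:
  assumes "i < n"
  shows "conqueror (X i) = D i"
  using conqueror_eqI(3)[of "X i" 2 "D i"] survives_X[OF assms] not_survives_X[OF assms]
    survives_D[OF assms] D_X_same_block[OF assms]
  by simp

lemma conqueror_false_lit:
  assumes "i < n"
  shows "conqueror (false_lit i) = X i"
proof (rule conqueror_eqI(3))
  show "survives (false_lit i) (1 - 1)"
    using survives_0 placed_vars(5)[OF assms] placed_subset[OF max23] by auto
  show "block_of 1 (X i) = block_of 1 (false_lit i)"
    using same_block_iff[OF placed_vars(3)[OF assms] placed_vars(5)[OF assms, of "\<not> a i"], of 1]
    by (cases "a i") simp_all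
  then show "\<not> survives (false_lit i) 1"
    using assms by (intro not_survivesI[of "X i"]) (cases "a i"; simp add: mem_players)+
qed (rule survives_X[OF assms])

lemma clause_block_members:
  assumes "j \<in> sat_clauses cs a" "z \<in> players n cs"
    and "block_of (clause_rank cs a j) z = block_of (clause_rank cs a j) (C j)"
  shows "z = C j \<or> (\<exists>c<4. z = F (4 * chosen_var a (cs ! j) + c))"
proof -
  define i where "i = chosen_var a (cs ! j)"
  have j: "j < length cs" "C j \<in> placed n cs a"
    using assms(1) by (simp_all add: sat_clauses_def placed_def)
  have i: "i < n"
    using chosen_var_less[OF max23 j(1)] by (simp add: i_def)
  have at_dummy: "z = F (4 * i + c)" if "c < 4" "\<sigma> z - 1 = 16 * i + (if c = 0 then 11 else 12 + c)" for c
    using player_at_slot[OF assms(2) placed_dummy[OF i that(1)]] slot_dummy[OF that(1)] that(2) by simp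
  have at_clause: "z = C j" if "\<sigma> z - 1 = 16 * i + 8 + 2 ^ clause_rank cs a j"
    using player_at_slot[OF assms(2) j(2)] that by (simp add: slot_def i_def)
  consider "clause_rank cs a j = 0" | "clause_rank cs a j = 1" | "clause_rank cs a j = 2"
    using sat_clause_rank_le[OF max23 assms(1)] by linarith
  then show ?thesis
  proof cases
    case 1
    then show ?thesis
      using assms(3) at_clause by (simp add: block_of_def seeded_at_slot j(2) slot_def i_def)
  next
    case 2
    have "\<sigma> z - 1 = 16 * i + 10 + (\<sigma> z - 1) mod 2"
      using assms(3) div_mult_mod_eq[of "\<sigma> z - 1" 2] 2
      by (simp add: block_of_def seeded_at_slot j(2) slot_def i_def)
    moreover have "(\<sigma> z - 1) mod 2 \<in> {0, 1}" by auto
    ultimately show ?thesis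
      using at_clause at_dummy[of 0] 2 by (auto simp: i_def)
  next
    case 3
    have "\<sigma> z - 1 = 16 * i + 12 + (\<sigma> z - 1) mod 4"
      using assms(3) div_mult_mod_eq[of "\<sigma> z - 1" 4] 3
      by (simp add: block_of_def seeded_at_slot j(2) slot_def i_def)
    moreover have "(\<sigma> z - 1) mod 4 \<in> {0, 1, 2, 3}" by auto
    ultimately show ?thesis
      using at_clause at_dummy[of 1] at_dummy[of 2] at_dummy[of 3] 3 by (auto simp: i_def)
  qed
qed

lemma survives_sat_clause:
  assumes "j \<in> sat_clauses cs a"
  shows "survives (C j) (clause_rank cs a j)"
  unfolding survives_def
proof (intro conjI ballI impI)
  have "j < length cs"
    using assms by (simp add: sat_clauses_def)
  then show "C j \<in> players n cs"
    by (simp add: mem_players)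
  fix z assume "z \<in> players n cs" "block_of (clause_rank cs a j) z = block_of (clause_rank cs a j) (C j)"
  from clause_block_members[OF assms this] show "rank (C j) \<le> rank z"
    using \<open>j < length cs\<close> by auto
qed

lemma true_lit_slot: "home_var cs a (true_lit i) = i" "offset cs a (true_lit i) = 8"
  by (cases "a i"; simp)+

lemma conqueror_sat_clause:
  assumes "j \<in> sat_clauses cs a"
  shows "conqueror (C j) = true_lit (chosen_var a (cs ! j))"
proof -
  define i k where "i = chosen_var a (cs ! j)" and "k = clause_rank cs a j"
  have j: "j < length cs" "C j \<in> placed n cs a"
    using assms by (simp_all add: sat_clauses_def placed_def)
  have i: "i < n"
    using chosen_var_less[OF max23 j(1)] by (simp add: i_def)
  have k: "k = 0 \<or> k = 1 \<or> k = 2"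
    using sat_clause_rank_le[OF max23 assms] unfolding k_def by presburger
  have block: "block_of (Suc k) (true_lit i) = block_of (Suc k) (C j)"
    using same_block_iff[OF placed_vars(5)[OF i] j(2), of "Suc k"] k true_lit_slot
    by (auto simp: i_def k_def)
  have survives: "survives (true_lit i) (Suc k)"
    using survives_mono[OF survives_true_lit[OF i]] k by auto
  have "true_lit i \<in> players n cs"
    using placed_vars(5)[OF i] placed_subset[OF max23] by blast
  moreover have "rank (true_lit i) < rank (C j)"
    using i by (cases "a i") simp_all
  ultimately have "\<not> survives (C j) (Suc k)"
    using not_survivesI block by blast
  then show ?thesis
    using conqueror_eqI(3)[OF _ _ survives block] survives_sat_clause[OF assms]
    by (simp add: i_def k_def)
qed

lemma is_dx_iff: "is_dx y \<longleftrightarrow> (\<exists>i. y = D i \<or> y = X i)"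
  by (cases y) auto

lemma conquered_by_D:
  assumes y: "y \<in> eliminated" and "i < n" "conqueror y = D i" "y \<noteq> X i"
  shows "y = DT i"
proof -
  have "\<not> 3 \<le> elim_round y"
    using survives_conqueror[OF y, of 3] not_survives_D[OF assms(2)] assms(3) by auto
  then have "elim_round y \<le> 2" by simp
  then have "block_of 2 y = block_of 2 (D i)"
    using block_of_mono conquerorD(2)[OF y] assms(3) by metis
  then have "y \<in> {D i, DT i, X i, false_lit i}"
    using mem_block_of_D[OF assms(2) eliminated_in_players[OF y]] placed_vars(1)[OF assms(2)]
    by (simp add: block_of_placed slot_def)
  moreover have "y \<noteq> D i" "y \<noteq> false_lit i"
    using conquerorD(3)[OF y] conqueror_false_lit[OF assms(2)] assms(3) by auto
  ultimately show ?thesis using assms(4) by blast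
qed

lemma conquered_by_X:
  assumes y: "y \<in> eliminated" and "i < n" "conqueror y = X i"
  shows "y = false_lit i"
proof -
  have "\<not> 2 \<le> elim_round y"
    using survives_conqueror[OF y, of 2] not_survives_X[OF assms(2)] assms(3) by auto
  then have "elim_round y = 1"
    using elim_roundD(1)[OF y] by simp
  then have "block_of 1 y = 8 * i + 1"
    using conquerorD(2)[OF y] placed_vars(3)[OF assms(2)] assms(3) by (simp add: block_of_placed slot_def)
  then show ?thesis
    using mem_block_of_X[OF assms(2) eliminated_in_players[OF y]] conquerorD(3)[OF y] assms(3) by auto
qed

lemma elimination_value_nonneg:
  assumes y: "y \<in> eliminated"
  shows "0 \<le> elimination_value y"
proof -
  have "y \<in> players n cs" "conqueror y \<in> players n cs"
    using eliminated_in_players conqueror_in_players y by blast+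
  then have "is_dx y \<Longrightarrow> \<exists>i<n. y = D i \<or> y = X i"
    and "is_dx (conqueror y) \<Longrightarrow> \<exists>i<n. conqueror y = D i \<or> conqueror y = X i"
    by (auto simp: is_dx_iff mem_players)
  then consider (D) i where "i < n" "y = D i" | (X) i where "i < n" "y = X i"
    | (by_D) i where "i < n" "conqueror y = D i" "y \<noteq> X i"
    | (by_X) i where "i < n" "conqueror y = X i"
    | (other) "\<not> is_dx y" "\<not> is_dx (conqueror y)"
    using is_dx.simps(2) by blast
  then show ?thesis
  proof cases
    case (D i)
    then show ?thesis by (simp add: elimination_value_def conqueror_D gval_def)
  next
    case (X i)
    then show ?thesis by (simp add: elimination_value_def conqueror_X gval_def)
  next
    case (by_D i)
    then have "elimination_value y = gval cs (D i) (DT i)"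
      using conquered_by_D[OF y] by (simp add: elimination_value_def)
    then show ?thesis by (simp add: gval_def)
  next
    case (by_X i)
    then show ?thesis
      using conquered_by_X[OF y] gval_X_lit_player by (simp add: elimination_value_def)
  next
    case other
    then show ?thesis by (simp add: elimination_value_def gval_nonneg)
  qed
qed

lemma elimination_value_false_lit: "i < n \<Longrightarrow> elimination_value (false_lit i) = 1"
  by (simp add: elimination_value_def conqueror_false_lit gval_X_lit_player)

lemma elimination_value_sat_clause:
  assumes "j \<in> sat_clauses cs a"
  shows "elimination_value (C j) = 1"
  using assms gval_lit_player_clause chosen_lit_in_clause
  by (simp add: elimination_value_def conqueror_sat_clause sat_clauses_def)

theorem tournament_value_ge_num_sat:
  "int n + int (num_sat cs a) \<le> tournament_value rank (gval cs) (tN n) (players n cs) \<sigma>"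
proof -
  define Q where "Q = false_lit ` {..<n} \<union> C ` sat_clauses cs a"
  have "Q \<subseteq> eliminated"
    using lit_player_eliminated clause_eliminated by (auto simp: Q_def sat_clauses_def)
  have "card Q = n + num_sat cs a"
  proof -
    have "inj_on false_lit {..<n}" by (auto simp: inj_on_def lit_player_inj)
    then have "card (false_lit ` {..<n}) = n" by (simp add: card_image)
    moreover have "card (C ` sat_clauses cs a) = num_sat cs a"
      by (simp add: card_image inj_on_def num_sat_eq_card)
    moreover have "false_lit ` {..<n} \<inter> C ` sat_clauses cs a = {}"
      by auto
    ultimately show ?thesis
      unfolding Q_def by (simp add: card_Un_disjoint sat_clauses_def)
  qed
  moreover have "(\<Sum>y\<in>Q. elimination_value y) = (\<Sum>y\<in>Q. 1)"
    using elimination_value_false_lit elimination_value_sat_clause by (intro sum.cong) (auto simp: Q_def)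
  moreover have "(\<Sum>y\<in>Q. elimination_value y) \<le> (\<Sum>y\<in>eliminated. elimination_value y)"
    using sum_mono2[OF finite_eliminated \<open>Q \<subseteq> eliminated\<close>] elimination_value_nonneg by blast
  ultimately show ?thesis
    by (simp add: tournament_value_eq)
qed

end

theorem corollary2:
  fixes n :: nat and cs :: "clause list"
  assumes "max23sat_instance n cs"
  shows "opt_T n cs = int (opt_sat cs) + int n"
proof -
  let ?value = "tournament_value (prank n (length cs)) (gval cs) (tN n) (players n cs)"
  have bounds: "- 5 * int (card (players n cs)) \<le> ?value \<sigma> \<and> ?value \<sigma> \<le> int (opt_sat cs) + int n"
    if "is_seeding (players n cs) (tN n) \<sigma>" for \<sigma>
  proof -
    interpret instance_tournament n cs "tN n" \<sigma>
      using that assms prank_inj by unfold_locales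
    show ?thesis using tournament_value_le_opt tournament_value_bounded_below by simp
  qed
  obtain a where a: "num_sat cs a = opt_sat cs"
    using ex_optimal_assignment by blast
  obtain \<sigma> where \<sigma>: "is_seeding (players n cs) (tN n) \<sigma>"
    "\<And>y. y \<in> placed n cs a \<Longrightarrow> \<sigma> y = Suc (slot cs a y)"
    using ex_slot_seeding[OF assms] by blast
  interpret slot_seeding n cs \<sigma> a
    using \<sigma> assms prank_inj by unfold_locales
  have "?value \<sigma> = int (opt_sat cs) + int n"
    using tournament_value_ge_num_sat bounds[OF \<sigma>(1)] a by simp
  then show ?thesis
    unfolding opt_T_def using opt_tournament_eqI[OF bounds \<sigma>(1)] by blast
qed

end
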